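(* Let $0<\varepsilon\le\frac1{12}$ and let $(x,y,z,C)\in\tilde Q(r)$ with $r\ge5$, and let $d(j_1,j_2):=1-y_{j_1,j_2}$. For $j\in J$ define $t^*_j:=\min\{t'\in[T]:\sum_{i\in[m]}\sum_{t=1}^{t'}z_{j,i,t}\ge1-\varepsilon\}$. Let $U\subseteq J$ with $\max_{u,v\in U}d(u,v)\le\varepsilon$, enumerate $U=\{j_1,\dots,j_{|U|}\}$ so that $t^*_{j_1}\le\dots\le t^*_{j_{|U|}}$ (ties broken arbitrarily), and process these jobs consecutively on one machine in this order in slots $1,2,\dots,|U|$, so that $j_k$ has completion time $C^A_{j_k}=k$. Then $C^A_j\le 2t^*_j$ for every $j\in U$.
   Context: Fix a finite set $J$ of unit-length jobs, a partial order $\prec$ on $J$, and $c,S,m\in\mathbb N$; let $T:=Sc$, $[T]=\{1,\dots,T\}$, and for $s\in\{0,\dots,S-1\}$ let $I_s:=\{cs+1,\dots,c(s+1)\}$. Sherali–Adams lift: for a polytope $K=\{x\in\mathbb R^{V}:Ax\ge b\}$ on a finite index set $V$ and $r\ge0$, $SA_r(K)$ is the set of vectors $y$ indexed by subsets of $V$ of size at most $r+1$ with $y_\emptyset=1$ and, for every row $\ell$ and all $I,J'\subseteq V$ with $|I|+|J'|\le r$, $\sum_{H\subseteq J'}(-1)^{|H|}\big(\sum_{v\in V}A_{\ell,v}y_{I\cup H\cup\{v\}}-b_\ell y_{I\cup H}\big)\ge0$. Let $\tilde K$ be the polytope in variables $z_{j,i,t}$ ($j\in J,i\in[m],t\in[T]$)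 and $x_{j,i,s}$ ($j\in J,i\in[m],s\in\{0,\dots,S-1\}$) defined by: $\sum_{i\in[m]}\sum_{t\in[T]}z_{j,i,t}=1$ for all $j$; $\sum_{j\in J}z_{j,i,t}\le1$ for all $i,t$; $\sum_{t'<t}\sum_{i}z_{j_1,i,t'}\ge\sum_{t'\le t}\sum_i z_{j_2,i,t'}$ for all $j_1\prec j_2$ and $t\in[T]$; $\sum_{t\in I_s}z_{j,i,t}=x_{j,i,s}$ for all $j,i,s$; $0\le z_{j,i,t}\le1$. For a vector in $SA_r(\tilde K)$ write $x_{j,i,s}$, $z_{j,i,t}$ for its singleton entries and $x_{(j_1,i_1,s_1),(j_2,i_2,s_2)}$ for the entry indexed by the set of the two $x$-variables. $\tilde Q(r)$ is the set of $(x,y,z,C)$ with $(x,z)\in SA_r(\tilde K)$, $y_{j_1,j_2}=\sum_{s=0}^{S-1}\sum_{i\in[m]}x_{(j_1,i,s),(j_2,i,s)}$ for all $j_1,j_2$, $C_{j_2}\ge C_{j_1}+(1-y_{j_1,j_2})\cdot c$ for all $j_1\prec j_2$, and $C_j=\sum_{i\in[m]}\sum_{t\in[T]}z_{j,i,t}\cdot t$ for all $j$. *)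

theory Defs
  imports Complex_Main
begin

datatype 'a lpvar = Zv 'a nat nat | Xv 'a nat nat

definition Iblk :: "nat \<Rightarrow> nat \<Rightarrow> nat set" where
  "Iblk c s = {c*s+1 .. c*(s+1)}"

text \<open>Finite index set V of the variables (machines [m] = {1..m}, times [T] = {1..T}, T = S c).\<close>
definition Vars :: "'a set \<Rightarrow> nat \<Rightarrow> nat \<Rightarrow> nat \<Rightarrow> 'a lpvar set" where
  "Vars J c S m =
     {Zv j i t | j i t. j \<in> J \<and> i \<in> {1..m} \<and> t \<in> {1..S*c}} \<union>
     {Xv j i s | j i s. j \<in> J \<and> i \<in> {1..m} \<and> s < S}"

text \<open>Rows (a, b) of the system A x \<ge> b describing K~; each equality is encoded
  as two opposite inequalities.\<close>
definition Krows :: "'a set \<Rightarrow> ('a \<Rightarrow> 'a \<Rightarrow> bool) \<Rightarrow> nat \<Rightarrow> nat \<Rightarrow> nat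
                     \<Rightarrow> (('a lpvar \<Rightarrow> real) \<times> real) set" where
  "Krows J prec c S m =
     \<comment> \<open>sum_i sum_t z_{j,i,t} = 1\<close>
     {((\<lambda>v. case v of Zv j' i t \<Rightarrow> if j' = j then 1 else 0 | Xv _ _ _ \<Rightarrow> 0), 1) | j. j \<in> J} \<union>
     {((\<lambda>v. case v of Zv j' i t \<Rightarrow> if j' = j then -1 else 0 | Xv _ _ _ \<Rightarrow> 0), -1) | j. j \<in> J} \<union>
     \<comment> \<open>sum_j z_{j,i,t} \<le> 1\<close>
     {((\<lambda>v. case v of Zv j i' t' \<Rightarrow> if i' = i \<and> t' = t then -1 else 0 | Xv _ _ _ \<Rightarrow> 0), -1)
        | i t. i \<in> {1..m} \<and> t \<in> {1..S*c}} \<union>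
     \<comment> \<open>precedence constraints\<close>
     {((\<lambda>v. case v of Zv j i t' \<Rightarrow>
            (if j = j1 \<and> t' < t then 1 else 0) - (if j = j2 \<and> t' \<le> t then 1 else 0)
          | Xv _ _ _ \<Rightarrow> 0), 0)
        | j1 j2 t. j1 \<in> J \<and> j2 \<in> J \<and> prec j1 j2 \<and> t \<in> {1..S*c}} \<union>
     \<comment> \<open>sum_{t \<in> I_s} z_{j,i,t} = x_{j,i,s}\<close>
     {((\<lambda>v. case v of Zv j' i' t \<Rightarrow> if j' = j \<and> i' = i \<and> t \<in> Iblk c s then 1 else 0
                    | Xv j' i' s' \<Rightarrow> if j' = j \<and> i' = i \<and> s' = s then -1 else 0), 0)
        | j i s. j \<in> J \<and> i \<in> {1..m} \<and> s < S} \<union>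
     {((\<lambda>v. case v of Zv j' i' t \<Rightarrow> if j' = j \<and> i' = i \<and> t \<in> Iblk c s then -1 else 0
                    | Xv j' i' s' \<Rightarrow> if j' = j \<and> i' = i \<and> s' = s then 1 else 0), 0)
        | j i s. j \<in> J \<and> i \<in> {1..m} \<and> s < S} \<union>
     \<comment> \<open>0 \<le> z_{j,i,t} \<le> 1\<close>
     {((\<lambda>v. if v = Zv j i t then 1 else 0), 0)
        | j i t. j \<in> J \<and> i \<in> {1..m} \<and> t \<in> {1..S*c}} \<union>
     {((\<lambda>v. if v = Zv j i t then -1 else 0), -1)
        | j i t. j \<in> J \<and> i \<in> {1..m} \<and> t \<in> {1..S*c}}"

text \<open>Sherali--Adams lift SA_r of the polytope {x \<in> R^V. A x \<ge> b} given by its rows.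
  A lifted vector is a function on subsets of V (only subsets of size \<le> r+1 matter).\<close>
definition SA :: "nat \<Rightarrow> 'v set \<Rightarrow> (('v \<Rightarrow> real) \<times> real) set \<Rightarrow> ('v set \<Rightarrow> real) set" where
  "SA r V rows = {Y. Y {} = 1 \<and>
     (\<forall>(a, b) \<in> rows. \<forall>I J'. I \<subseteq> V \<longrightarrow> J' \<subseteq> V \<longrightarrow> card I + card J' \<le> r \<longrightarrow>
        (\<Sum>H\<in>Pow J'. (-1) ^ card H *
            ((\<Sum>v\<in>V. a v * Y (I \<union> H \<union> {v})) - b * Y (I \<union> H))) \<ge> 0)}"

text \<open>Membership of (x,y,z,C) in Q~(r); x and z are the singleton entries of Y.\<close>
definition in_Qtilde :: "'a set \<Rightarrow> ('a \<Rightarrow> 'a \<Rightarrow> bool) \<Rightarrow> nat \<Rightarrow> nat \<Rightarrow> nat \<Rightarrow> nat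
     \<Rightarrow> ('a lpvar set \<Rightarrow> real) \<Rightarrow> ('a \<Rightarrow> 'a \<Rightarrow> real) \<Rightarrow> ('a \<Rightarrow> real) \<Rightarrow> bool" where
  "in_Qtilde J prec c S m r Y y C \<longleftrightarrow>
     Y \<in> SA r (Vars J c S m) (Krows J prec c S m) \<and>
     (\<forall>j1\<in>J. \<forall>j2\<in>J. y j1 j2 = (\<Sum>s<S. \<Sum>i\<in>{1..m}. Y {Xv j1 i s, Xv j2 i s})) \<and>
     (\<forall>j1\<in>J. \<forall>j2\<in>J. prec j1 j2 \<longrightarrow> C j2 \<ge> C j1 + (1 - y j1 j2) * real c) \<and>
     (\<forall>j\<in>J. C j = (\<Sum>i\<in>{1..m}. \<Sum>t\<in>{1..S*c}. Y {Zv j i t} * real t))"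

definition tstar :: "nat \<Rightarrow> nat \<Rightarrow> nat \<Rightarrow> real \<Rightarrow> ('a lpvar set \<Rightarrow> real) \<Rightarrow> 'a \<Rightarrow> nat" where
  "tstar c S m \<epsilon> Y j = (LEAST t'. t' \<in> {1..S*c} \<and>
      (\<Sum>i\<in>{1..m}. \<Sum>t\<in>{1..t'}. Y {Zv j i t}) \<ge> 1 - \<epsilon>)"

end

theory Submission
  imports Defs
begin

text \<open>Fix the position k, let a be the k-th job and t = t*_a, and let B be the first k jobs,
  so t*_b \<le> t for b \<in> B. Lifting the constraints of K~ by the level-one Sherali--Adams
  products with x_{a,i,s}, the overlap y_{a,b} counts the mass of b placed in the same block
  as a. Since b has mass at least 1 - \<epsilon> by time t*_b \<le> t, at most \<epsilon> of this overlap lies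
  after time t. The remaining overlaps, summed over b \<in> B, are bounded by the machine
  capacity conditioned on x_{a,i,s}: at most t units per block, hence at most t in total.
  Together with y_{a,b} \<ge> 1 - \<epsilon> this gives k (1 - 2\<epsilon>) \<le> t, and 1 - 2\<epsilon> \<ge> 1/2.\<close>

lemma SA_row_le:
  assumes "Y \<in> SA r V rows" "(a, b) \<in> rows" "I \<subseteq> V" "card I \<le> r"
  shows "b * Y I \<le> (\<Sum>v\<in>V. a v * Y (I \<union> {v}))"
proof -
  have "\<forall>I J'. I \<subseteq> V \<longrightarrow> J' \<subseteq> V \<longrightarrow> card I + card J' \<le> r \<longrightarrow>
      (\<Sum>H\<in>Pow J'. (-1) ^ card H * ((\<Sum>v\<in>V. a v * Y (I \<union> H \<union> {v})) - b * Y (I \<union> H))) \<ge> 0"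
    using assms(1,2) unfolding SA_def by fastforce
  from this[rule_format, of I "{}"] show ?thesis using assms(3,4) by simp
qed

lemma finite_Vars: "finite J \<Longrightarrow> finite (Vars J c S m)"
proof -
  assume "finite J"
  moreover have "Vars J c S m = (\<lambda>(j, i, t). Zv j i t) ` (J \<times> {1..m} \<times> {1..S*c})
      \<union> (\<lambda>(j, i, s). Xv j i s) ` (J \<times> {1..m} \<times> {..<S})"
    unfolding Vars_def by (auto simp: image_iff)
  ultimately show ?thesis by simp
qed

lemma sum_Vars:
  assumes "finite J"
  shows "(\<Sum>v\<in>Vars J c S m. g v) = (\<Sum>j\<in>J. \<Sum>i\<in>{1..m}. \<Sum>t\<in>{1..S*c}. g (Zv j i t))
     + (\<Sum>j\<in>J. \<Sum>i\<in>{1..m}. \<Sum>s<S. g (Xv j i s))"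
proof -
  define fZ where "fZ = (\<lambda>(j::'a, i::nat, t::nat). Zv j i t)"
  define fX where "fX = (\<lambda>(j::'a, i::nat, s::nat). Xv j i s)"
  define AZ where "AZ = J \<times> {1..m} \<times> {1..S*c}"
  define AX where "AX = J \<times> {1..m} \<times> {..<S}"
  have "Vars J c S m = fZ ` AZ \<union> fX ` AX"
    unfolding Vars_def fZ_def fX_def AZ_def AX_def by (auto simp: image_iff)
  moreover have "fZ ` AZ \<inter> fX ` AX = {}" "inj_on fZ AZ" "inj_on fX AX"
    unfolding fZ_def fX_def by (auto simp: inj_on_def)
  moreover have "finite AZ" "finite AX" using assms unfolding AZ_def AX_def by auto
  ultimately have "(\<Sum>v\<in>Vars J c S m. g v) = sum g (fZ ` AZ) + sum g (fX ` AX)"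
    by (simp add: sum.union_disjoint)
  also have "\<dots> = sum (g \<circ> fZ) AZ + sum (g \<circ> fX) AX"
    using \<open>inj_on fZ AZ\<close> \<open>inj_on fX AX\<close> by (simp add: sum.reindex)
  finally show ?thesis
    unfolding AZ_def AX_def fZ_def fX_def by (simp add: sum.cartesian_product split_def)
qed

lemma Iblk_subset: "s < S \<Longrightarrow> Iblk c s \<subseteq> {1..S*c}"
proof -
  assume "s < S"
  then have "c * (s + 1) \<le> S * c" by (metis Suc_eq_plus1 Suc_leI mult.commute mult_le_mono2)
  then show ?thesis unfolding Iblk_def by auto
qed

lemma finite_Iblk: "finite (Iblk c s)"
  unfolding Iblk_def by simp

lemma sum_Iblk_partition: "(\<Sum>s<S. \<Sum>t\<in>Iblk c s. f t) = (\<Sum>t\<in>{1..S*c}. (f t :: real))"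
proof (induction S)
  case 0
  then show ?case by simp
next
  case (Suc S)
  have "{1..Suc S * c} = {1..S*c} \<union> Iblk c S" "{1..S*c} \<inter> Iblk c S = {}"
    unfolding Iblk_def by (auto simp: algebra_simps)
  then have "(\<Sum>t\<in>{1..Suc S * c}. f t) = (\<Sum>t\<in>{1..S*c}. f t) + (\<Sum>t\<in>Iblk c S. f t)"
    by (simp add: sum.union_disjoint Iblk_def)
  then show ?case using Suc by simp
qed

lemma if_zero_mult: "(if P then a else 0) * x = (if P then a * x else (0::real))"
  by simp

lemma sum_if_const_cond: "(\<Sum>x\<in>A. if P then f x else 0) = (if P then sum f A else (0::real))"
  by simp

lemma if_conj_zero: "(if P \<and> Q then x else (0::real)) = (if P then if Q then x else 0 else 0)"
  by simp

lemma if_neg_zero: "(if P then - x else 0) = - (if P then x else (0::real))"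
  by simp

lemmas row_simps = sum_Vars if_zero_mult sum_if_const_cond sum.delta sum.delta' if_conj_zero

locale SA_schedule =
  fixes J :: "'a set" and prec :: "'a \<Rightarrow> 'a \<Rightarrow> bool" and c S m r :: nat
    and Y :: "'a lpvar set \<Rightarrow> real"
  assumes finite_J: "finite J"
    and Y_SA: "Y \<in> SA r (Vars J c S m) (Krows J prec c S m)"
    and one_le_r: "1 \<le> r"
begin

abbreviation (input) V where "V \<equiv> Vars J c S m"

lemma lifted_assignment:
  assumes I: "I \<subseteq> V" "card I \<le> r" and j: "j \<in> J"
  shows "(\<Sum>i\<in>{1..m}. \<Sum>t\<in>{1..S*c}. Y (I \<union> {Zv j i t})) = Y I"
proof -
  let ?a = "\<lambda>v. case v of Zv j' i t \<Rightarrow> if j' = j then 1 else (0::real) | Xv _ _ _ \<Rightarrow> 0"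
  let ?a' = "\<lambda>v. case v of Zv j' i t \<Rightarrow> if j' = j then -1 else (0::real) | Xv _ _ _ \<Rightarrow> 0"
  have rows: "(?a, 1) \<in> Krows J prec c S m" "(?a', -1) \<in> Krows J prec c S m"
    using j unfolding Krows_def by blast+
  have "(\<Sum>v\<in>V. ?a v * Y (I \<union> {v})) = (\<Sum>i\<in>{1..m}. \<Sum>t\<in>{1..S*c}. Y (I \<union> {Zv j i t}))"
    "(\<Sum>v\<in>V. ?a' v * Y (I \<union> {v})) = - (\<Sum>i\<in>{1..m}. \<Sum>t\<in>{1..S*c}. Y (I \<union> {Zv j i t}))"
    using finite_J j by (simp_all add: row_simps sum_negf)
  then show ?thesis using SA_row_le[OF Y_SA rows(1) I] SA_row_le[OF Y_SA rows(2) I] by simp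
qed

lemma lifted_capacity:
  assumes I: "I \<subseteq> V" "card I \<le> r" and it: "i \<in> {1..m}" "t \<in> {1..S*c}"
  shows "(\<Sum>j\<in>J. Y (I \<union> {Zv j i t})) \<le> Y I"
proof -
  let ?a = "\<lambda>v. case v of Zv j i' t' \<Rightarrow> if i' = i \<and> t' = t then -1 else (0::real) | Xv _ _ _ \<Rightarrow> 0"
  have row: "(?a, -1) \<in> Krows J prec c S m" using it unfolding Krows_def by blast
  have "(\<Sum>v\<in>V. ?a v * Y (I \<union> {v})) = - (\<Sum>j\<in>J. Y (I \<union> {Zv j i t}))"
    using finite_J it by (simp add: row_simps sum_negf)
  then show ?thesis using SA_row_le[OF Y_SA row I] by simp
qed

lemma lifted_nonneg:
  assumes I: "I \<subseteq> V" "card I \<le> r" and jit: "j \<in> J" "i \<in> {1..m}" "t \<in> {1..S*c}"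
  shows "0 \<le> Y (I \<union> {Zv j i t})"
proof -
  let ?a = "\<lambda>v. if v = Zv j i t then 1 else (0::real)"
  have row: "(?a, 0) \<in> Krows J prec c S m" using jit unfolding Krows_def by blast
  have "Zv j i t \<in> V" using jit unfolding Vars_def by blast
  then have "(\<Sum>v\<in>V. ?a v * Y (I \<union> {v})) = Y (I \<union> {Zv j i t})"
    using finite_Vars[OF finite_J] by (simp add: if_zero_mult sum.delta')
  then show ?thesis using SA_row_le[OF Y_SA row I] by simp
qed

lemma lifted_block:
  assumes I: "I \<subseteq> V" "card I \<le> r" and jis: "j \<in> J" "i \<in> {1..m}" "s < S"
  shows "Y (I \<union> {Xv j i s}) = (\<Sum>t\<in>Iblk c s. Y (I \<union> {Zv j i t}))"
proof -
  let ?a = "\<lambda>v. case v of Zv j' i' t \<Rightarrow> if j' = j \<and> i' = i \<and> t \<in> Iblk c s then 1 else (0::real)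
                    | Xv j' i' s' \<Rightarrow> if j' = j \<and> i' = i \<and> s' = s then -1 else 0"
  let ?a' = "\<lambda>v. case v of Zv j' i' t \<Rightarrow> if j' = j \<and> i' = i \<and> t \<in> Iblk c s then -1 else (0::real)
                    | Xv j' i' s' \<Rightarrow> if j' = j \<and> i' = i \<and> s' = s then 1 else 0"
  let ?z = "\<Sum>t\<in>{1..S*c}. if t \<in> Iblk c s then Y (I \<union> {Zv j i t}) else 0"
  have rows: "(?a, 0) \<in> Krows J prec c S m" "(?a', 0) \<in> Krows J prec c S m"
    using jis unfolding Krows_def by blast+
  have "(\<Sum>v\<in>V. ?a v * Y (I \<union> {v})) = ?z - Y (I \<union> {Xv j i s})"
    using finite_J jis by (simp add: row_simps cong: if_cong)
  moreover have "(\<Sum>v\<in>V. ?a' v * Y (I \<union> {v})) = Y (I \<union> {Xv j i s}) - ?z"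
    using finite_J jis by (simp add: row_simps if_neg_zero sum_negf cong: if_cong)
  moreover have "?z = (\<Sum>t\<in>Iblk c s. Y (I \<union> {Zv j i t}))"
    using Iblk_subset[OF jis(3), of c] by (simp add: sum.inter_restrict[symmetric] Int_absorb1)
  ultimately show ?thesis using SA_row_le[OF Y_SA rows(1) I] SA_row_le[OF Y_SA rows(2) I] by simp
qed

lemma Y_empty: "Y {} = 1"
  using Y_SA unfolding SA_def by blast

lemma singleton_conditioning:
  assumes "w \<in> V"
  shows "{w} \<subseteq> V" "card {w} \<le> r"
  using assms one_le_r by simp_all

lemma Zv_in_Vars: "j \<in> J \<Longrightarrow> i \<in> {1..m} \<Longrightarrow> t \<in> {1..S*c} \<Longrightarrow> Zv j i t \<in> V"
  unfolding Vars_def by blast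

lemma Xv_in_Vars: "j \<in> J \<Longrightarrow> i \<in> {1..m} \<Longrightarrow> s < S \<Longrightarrow> Xv j i s \<in> V"
  unfolding Vars_def by blast

lemma assignment_total: "j \<in> J \<Longrightarrow> (\<Sum>i\<in>{1..m}. \<Sum>t\<in>{1..S*c}. Y {Zv j i t}) = 1"
  using lifted_assignment[of "{}"] Y_empty by simp

lemma Zv_nonneg: "j \<in> J \<Longrightarrow> i \<in> {1..m} \<Longrightarrow> t \<in> {1..S*c} \<Longrightarrow> 0 \<le> Y {Zv j i t}"
  using lifted_nonneg[of "{}"] by simp

lemma Xv_eq_block: "j \<in> J \<Longrightarrow> i \<in> {1..m} \<Longrightarrow> s < S \<Longrightarrow> Y {Xv j i s} = (\<Sum>t\<in>Iblk c s. Y {Zv j i t})"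
  using lifted_block[of "{}"] by simp

lemma Xv_nonneg:
  assumes "j \<in> J" "i \<in> {1..m}" "s < S"
  shows "0 \<le> Y {Xv j i s}"
  unfolding Xv_eq_block[OF assms] using assms Iblk_subset[OF assms(3), of c]
  by (intro sum_nonneg) (blast intro: Zv_nonneg)

lemma Xv_total:
  assumes "j \<in> J"
  shows "(\<Sum>s<S. \<Sum>i\<in>{1..m}. Y {Xv j i s}) = 1"
proof -
  have "(\<Sum>s<S. \<Sum>i\<in>{1..m}. Y {Xv j i s}) = (\<Sum>s<S. \<Sum>i\<in>{1..m}. \<Sum>t\<in>Iblk c s. Y {Zv j i t})"
    using assms by (simp add: Xv_eq_block)
  also have "\<dots> = (\<Sum>i\<in>{1..m}. \<Sum>t\<in>{1..S*c}. Y {Zv j i t})"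
    by (subst sum.swap) (simp add: sum_Iblk_partition)
  finally show ?thesis using assignment_total[OF assms] by simp
qed

lemma pair_Xv_Zv_le:
  assumes a: "a \<in> J" and b: "b \<in> J" "i \<in> {1..m}" "s < S" "\<tau> \<in> Iblk c s"
  shows "Y {Xv a i s, Zv b i \<tau>} \<le> Y {Zv b i \<tau>}"
proof -
  have \<tau>: "\<tau> \<in> {1..S*c}" using Iblk_subset[OF b(3)] b(4) by blast
  note I = singleton_conditioning[OF Zv_in_Vars[OF b(1,2) \<tau>]]
  have nonneg: "0 \<le> Y ({Zv b i \<tau>} \<union> {Zv a i' \<tau>'})" if "i' \<in> {1..m}" "\<tau>' \<in> {1..S*c}" for i' \<tau>'
    using lifted_nonneg I a that by blast
  have "Y {Xv a i s, Zv b i \<tau>} = (\<Sum>\<tau>'\<in>Iblk c s. Y ({Zv b i \<tau>} \<union> {Zv a i \<tau>'}))"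
    using lifted_block[of "{Zv b i \<tau>}"] I a b(2,3) by (simp add: insert_commute)
  also have "\<dots> \<le> (\<Sum>\<tau>'\<in>{1..S*c}. Y ({Zv b i \<tau>} \<union> {Zv a i \<tau>'}))"
    by (rule sum_mono2) (use Iblk_subset[OF b(3)] nonneg b(2) in auto)
  also have "\<dots> \<le> (\<Sum>i'\<in>{1..m}. \<Sum>\<tau>'\<in>{1..S*c}. Y ({Zv b i \<tau>} \<union> {Zv a i' \<tau>'}))"
    by (rule member_le_sum) (use b(2) nonneg in \<open>auto intro: sum_nonneg\<close>)
  also have "\<dots> = Y {Zv b i \<tau>}"
    using lifted_assignment I a by blast
  finally show ?thesis .
qed

lemma tstar_attained:
  assumes b: "b \<in> J" and \<epsilon>: "0 \<le> \<epsilon>"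
  shows "tstar c S m \<epsilon> Y b \<le> S*c"
    and "1 - \<epsilon> \<le> (\<Sum>i\<in>{1..m}. \<Sum>\<tau>\<in>{1..tstar c S m \<epsilon> Y b}. Y {Zv b i \<tau>})"
proof -
  let ?P = "\<lambda>t'. t' \<in> {1..S*c} \<and> (\<Sum>i\<in>{1..m}. \<Sum>\<tau>\<in>{1..t'}. Y {Zv b i \<tau>}) \<ge> 1 - \<epsilon>"
  have "S * c \<noteq> 0"
  proof
    assume "S * c = 0"
    with assignment_total[OF b] show False by simp
  qed
  then have "?P (S*c)" using assignment_total[OF b] \<epsilon> by simp
  then have "?P (LEAST t'. ?P t')" by (rule LeastI)
  then show "tstar c S m \<epsilon> Y b \<le> S*c"
    and "1 - \<epsilon> \<le> (\<Sum>i\<in>{1..m}. \<Sum>\<tau>\<in>{1..tstar c S m \<epsilon> Y b}. Y {Zv b i \<tau>})"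
    unfolding tstar_def by auto
qed

lemma mass_after_tstar_le:
  assumes b: "b \<in> J" and \<epsilon>: "0 \<le> \<epsilon>" and t: "tstar c S m \<epsilon> Y b \<le> t"
  shows "(\<Sum>i\<in>{1..m}. \<Sum>\<tau>\<in>{1..S*c}. if t < \<tau> then Y {Zv b i \<tau>} else 0) \<le> \<epsilon>"
proof -
  let ?tb = "tstar c S m \<epsilon> Y b"
  let ?early = "\<lambda>i. \<Sum>\<tau>\<in>{1..S*c}. if \<tau> \<le> t then Y {Zv b i \<tau>} else 0"
  let ?late = "\<lambda>i. \<Sum>\<tau>\<in>{1..S*c}. if t < \<tau> then Y {Zv b i \<tau>} else 0"
  have "(\<Sum>i\<in>{1..m}. \<Sum>\<tau>\<in>{1..?tb}. Y {Zv b i \<tau>}) \<le> (\<Sum>i\<in>{1..m}. ?early i)"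
  proof (rule sum_mono)
    fix i assume i: "i \<in> {1..m}"
    have "(\<Sum>\<tau>\<in>{1..?tb}. Y {Zv b i \<tau>}) = (\<Sum>\<tau>\<in>{1..?tb}. if \<tau> \<le> t then Y {Zv b i \<tau>} else 0)"
      using t by (intro sum.cong) auto
    also have "\<dots> \<le> ?early i"
      by (rule sum_mono2) (use tstar_attained(1)[OF b \<epsilon>] Zv_nonneg[OF b i] in auto)
    finally show "(\<Sum>\<tau>\<in>{1..?tb}. Y {Zv b i \<tau>}) \<le> ?early i" .
  qed
  then have "1 - \<epsilon> \<le> (\<Sum>i\<in>{1..m}. ?early i)"
    using tstar_attained(2)[OF b \<epsilon>] by linarith
  moreover have "(\<Sum>i\<in>{1..m}. ?early i) + (\<Sum>i\<in>{1..m}. ?late i) = 1"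
    unfolding assignment_total[OF b, symmetric] sum.distrib[symmetric]
    by (intro sum.cong refl) auto
  ultimately show ?thesis by linarith
qed

definition overlap :: "'a \<Rightarrow> 'a \<Rightarrow> real" where
  "overlap a b = (\<Sum>s<S. \<Sum>i\<in>{1..m}. Y {Xv a i s, Xv b i s})"

definition overlap_until :: "'a \<Rightarrow> 'a \<Rightarrow> nat \<Rightarrow> real" where
  "overlap_until a b t =
     (\<Sum>s<S. \<Sum>i\<in>{1..m}. \<Sum>\<tau>\<in>Iblk c s. if \<tau> \<le> t then Y {Xv a i s, Zv b i \<tau>} else 0)"

lemma overlap_le_overlap_until:
  assumes a: "a \<in> J" and b: "b \<in> J" and \<epsilon>: "0 \<le> \<epsilon>" and t: "tstar c S m \<epsilon> Y b \<le> t"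
  shows "overlap a b \<le> \<epsilon> + overlap_until a b t"
proof -
  have "Y {Xv a i s, Xv b i s} = (\<Sum>\<tau>\<in>Iblk c s. Y {Xv a i s, Zv b i \<tau>})"
    if "i \<in> {1..m}" "s < S" for i s
    using lifted_block[OF singleton_conditioning[OF Xv_in_Vars[OF a that]] b that]
    by (simp add: insert_commute)
  then have "overlap a b = (\<Sum>s<S. \<Sum>i\<in>{1..m}. \<Sum>\<tau>\<in>Iblk c s. Y {Xv a i s, Zv b i \<tau>})"
    unfolding overlap_def by simp
  also have "\<dots> \<le> (\<Sum>s<S. \<Sum>i\<in>{1..m}. \<Sum>\<tau>\<in>Iblk c s.
      (if \<tau> \<le> t then Y {Xv a i s, Zv b i \<tau>} else 0) + (if t < \<tau> then Y {Zv b i \<tau>} else 0))"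
    by (intro sum_mono) (use pair_Xv_Zv_le[OF a b] in auto)
  also have "\<dots> = overlap_until a b t
      + (\<Sum>i\<in>{1..m}. \<Sum>\<tau>\<in>{1..S*c}. if t < \<tau> then Y {Zv b i \<tau>} else 0)"
    unfolding overlap_until_def sum.distrib by (subst (2) sum.swap) (simp add: sum_Iblk_partition)
  finally show ?thesis using mass_after_tstar_le[OF b \<epsilon> t] by linarith
qed

lemma sum_overlap_until_le:
  assumes a: "a \<in> J" and B: "B \<subseteq> J"
  shows "(\<Sum>b\<in>B. overlap_until a b t) \<le> real t"
proof -
  have "(\<Sum>b\<in>B. overlap_until a b t) = (\<Sum>s<S. \<Sum>i\<in>{1..m}. \<Sum>\<tau>\<in>Iblk c s.
      if \<tau> \<le> t then \<Sum>b\<in>B. Y {Xv a i s, Zv b i \<tau>} else 0)"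
    unfolding overlap_until_def by (simp only: sum.swap[where A = B] sum_if_const_cond)
  also have "\<dots> \<le> (\<Sum>s<S. \<Sum>i\<in>{1..m}. \<Sum>\<tau>\<in>Iblk c s. if \<tau> \<le> t then Y {Xv a i s} else 0)"
  proof (intro sum_mono)
    fix s i \<tau> assume s: "s \<in> {..<S}" and i: "i \<in> {1..m}" and \<tau>: "\<tau> \<in> Iblk c s"
    have sS: "s < S" using s by simp
    have \<tau>T: "\<tau> \<in> {1..S*c}" using Iblk_subset[OF sS] \<tau> by blast
    note I = singleton_conditioning[OF Xv_in_Vars[OF a i sS]]
    have "(\<Sum>b\<in>B. Y {Xv a i s, Zv b i \<tau>}) \<le> (\<Sum>b\<in>J. Y {Xv a i s, Zv b i \<tau>})"
      using lifted_nonneg[OF I _ i \<tau>T] by (intro sum_mono2[OF finite_J B]) (auto simp: insert_commute)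
    also have "\<dots> \<le> Y {Xv a i s}"
      using lifted_capacity[OF I i \<tau>T] by (simp add: insert_commute)
    finally show "(if \<tau> \<le> t then \<Sum>b\<in>B. Y {Xv a i s, Zv b i \<tau>} else 0)
        \<le> (if \<tau> \<le> t then Y {Xv a i s} else 0)" by simp
  qed
  also have "\<dots> \<le> (\<Sum>s<S. \<Sum>i\<in>{1..m}. real t * Y {Xv a i s})"
  proof (intro sum_mono)
    fix s i assume s: "s \<in> {..<S}" and i: "i \<in> {1..m}"
    have x: "0 \<le> Y {Xv a i s}" using Xv_nonneg[OF a i] s by simp
    have "(\<Sum>\<tau>\<in>Iblk c s. if \<tau> \<le> t then Y {Xv a i s} else 0) = (\<Sum>\<tau>\<in>Iblk c s \<inter> {..t}. Y {Xv a i s})"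
      by (simp only: sum.inter_restrict[OF finite_Iblk] atMost_iff)
    also have "\<dots> \<le> (\<Sum>\<tau>\<in>{1..t}. Y {Xv a i s})"
      by (rule sum_mono2) (auto simp: Iblk_def x)
    finally show "(\<Sum>\<tau>\<in>Iblk c s. if \<tau> \<le> t then Y {Xv a i s} else 0) \<le> real t * Y {Xv a i s}"
      by simp
  qed
  also have "\<dots> = real t"
    using Xv_total[OF a] by (simp add: sum_distrib_left[symmetric])
  finally show ?thesis .
qed

lemma card_close_jobs_le:
  assumes a: "a \<in> J" and B: "B \<subseteq> J" and \<epsilon>: "0 \<le> \<epsilon>"
    and early: "\<forall>b\<in>B. tstar c S m \<epsilon> Y b \<le> t"
    and close: "\<forall>b\<in>B. 1 - \<epsilon> \<le> overlap a b"
  shows "real (card B) * (1 - 2 * \<epsilon>) \<le> real t"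
proof -
  have "real (card B) * (1 - \<epsilon>) \<le> (\<Sum>b\<in>B. overlap a b)"
    using sum_mono[of B "\<lambda>_. 1 - \<epsilon>"] close by simp
  also have "\<dots> \<le> (\<Sum>b\<in>B. \<epsilon> + overlap_until a b t)"
    using overlap_le_overlap_until[OF a _ \<epsilon>] B early by (intro sum_mono) auto
  also have "\<dots> \<le> real (card B) * \<epsilon> + real t"
    using sum_overlap_until_le[OF a B, of t] by (simp add: sum.distrib)
  finally show ?thesis by (simp add: algebra_simps)
qed

end

theorem mainTheorem16:
  fixes J :: "'a set" and prec :: "'a \<Rightarrow> 'a \<Rightarrow> bool"
    and c S m r :: nat and \<epsilon> :: real
    and Y :: "'a lpvar set \<Rightarrow> real" and y :: "'a \<Rightarrow> 'a \<Rightarrow> real" and C :: "'a \<Rightarrow> real"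
    and U :: "'a set" and \<sigma> :: "nat \<Rightarrow> 'a"
  assumes finJ: "finite J"
    and irrefl: "\<forall>j\<in>J. \<not> prec j j"
    and trans: "\<forall>j1\<in>J. \<forall>j2\<in>J. \<forall>j3\<in>J. prec j1 j2 \<longrightarrow> prec j2 j3 \<longrightarrow> prec j1 j3"
    and eps: "0 < \<epsilon>" "\<epsilon> \<le> 1/12"
    and r: "r \<ge> 5"
    and Q: "in_Qtilde J prec c S m r Y y C"
    and U: "U \<subseteq> J" "\<forall>u\<in>U. \<forall>v\<in>U. 1 - y u v \<le> \<epsilon>"
    and enum: "bij_betw \<sigma> {1..card U} U"
    and sorted: "\<forall>k\<in>{1..card U}. \<forall>k'\<in>{1..card U}. k \<le> k' \<longrightarrow>
                   tstar c S m \<epsilon> Y (\<sigma> k) \<le> tstar c S m \<epsilon> Y (\<sigma> k')"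
  shows "\<forall>k\<in>{1..card U}. real k \<le> 2 * real (tstar c S m \<epsilon> Y (\<sigma> k))"
proof
  fix k assume k: "k \<in> {1..card U}"
  note Q_unfolded = Q[unfolded in_Qtilde_def]
  interpret SA_schedule J prec c S m r Y
    using finJ conjunct1[OF Q_unfolded] r by unfold_locales simp_all
  define B where "B = \<sigma> ` {1..k}"
  have sub: "{1..k} \<subseteq> {1..card U}" using k by auto
  have aU: "\<sigma> k \<in> U" using bij_betw_apply[OF enum k] .
  have BU: "B \<subseteq> U" unfolding B_def using sub bij_betw_imp_surj_on[OF enum] by blast
  have cardB: "card B = k"
    unfolding B_def using inj_on_subset[OF bij_betw_imp_inj_on[OF enum] sub] by (simp add: card_image)
  have aJ: "\<sigma> k \<in> J" and BJ: "B \<subseteq> J" using aU BU U(1) by blast+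
  have "\<forall>b\<in>B. 1 - \<epsilon> \<le> overlap (\<sigma> k) b"
  proof
    fix b assume "b \<in> B"
    then have b: "b \<in> U" using BU by blast
    have "y (\<sigma> k) b = overlap (\<sigma> k) b"
      using conjunct1[OF conjunct2[OF Q_unfolded]] aJ b U(1) unfolding overlap_def by blast
    then show "1 - \<epsilon> \<le> overlap (\<sigma> k) b" using U(2) aU b by fastforce
  qed
  moreover have "\<forall>b\<in>B. tstar c S m \<epsilon> Y b \<le> tstar c S m \<epsilon> Y (\<sigma> k)"
    using sorted k unfolding B_def by force
  ultimately have "real k * (1 - 2 * \<epsilon>) \<le> real (tstar c S m \<epsilon> Y (\<sigma> k))"
    using card_close_jobs_le[OF aJ BJ] eps(1) cardB by simp
  moreover have "real k * (1 / 2) \<le> real k * (1 - 2 * \<epsilon>)"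
    using eps(2) by (intro mult_left_mono) auto
  ultimately show "real k \<le> 2 * real (tstar c S m \<epsilon> Y (\<sigma> k))" by linarith
qed

end
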